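(* Under the setting of the context, if (TS1) holds and $u$ is the solution of problem (P), then $$\mu_x\sum_{m=0}^\infty u(m\mu_x,t)=A\mu_x\quad\text{for all }t\in\mathbb{T}$$ (and $u(m\mu_x,t)=0$ for $m<0$, so this is the sum over all $m\in\mathbb{Z}$).
   Context: A time scale $\mathbb{T}$ is a nonempty closed subset of $\mathbb{R}$; here $\min\mathbb{T}=0$ and $\sup\mathbb{T}=+\infty$. $\sigma(t)=\inf\{s\in\mathbb{T}:s>t\}$ is the forward jump and $\mu_t(t)=\sigma(t)-t$ the graininess; $u^{\Delta_t}$ denotes the (Hilger) delta derivative in $t$. Fix $A>0$, $k>0$, $\mu_x>0$, $\Omega=\mu_x\mathbb{Z}\times\mathbb{T}$. Problem (P): $u^{\Delta_t}(x,t)+k\frac{u(x,t)-u(x-\mu_x,t)}{\mu_x}=0$ for $(x,t)\in\Omega$, $u(0,0)=A$, $u(x,0)=0$ for $x\ne0$. A solution is $u:\Omega\to\mathbb{R}$ with each $u(x,\cdot)$ delta differentiable on $\mathbb{T}$, satisfying (P), and bounded on $\mu_x\mathbb{Z}\times(\mathbb{T}\cap[0,T_0])$ for every $T_0>0$. Condition (TS1): $1-\frac{k\mu_t(t)}{\mu_x}>0$ for all $t\in\mathbb{T}$. *)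

theory Defs
  imports Complex_Main
begin

definition time_scale :: "real set \<Rightarrow> bool" where
  "time_scale TS \<longleftrightarrow> TS \<noteq> {} \<and> closed TS"

definition fwd_jump :: "real set \<Rightarrow> real \<Rightarrow> real" where
  "fwd_jump TS t = Inf {s \<in> TS. s > t}"

definition graininess :: "real set \<Rightarrow> real \<Rightarrow> real" where
  "graininess TS t = fwd_jump TS t - t"

definition has_delta_deriv :: "real set \<Rightarrow> (real \<Rightarrow> real) \<Rightarrow> real \<Rightarrow> real \<Rightarrow> bool" where
  "has_delta_deriv TS f D t \<longleftrightarrow>
     (\<forall>\<epsilon>>0. \<exists>\<delta>>0. \<forall>s\<in>TS. \<bar>t - s\<bar> < \<delta> \<longrightarrow>
        \<bar>f (fwd_jump TS t) - f s - D * (fwd_jump TS t - s)\<bar> \<le> \<epsilon> * \<bar>fwd_jump TS t - s\<bar>)"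

definition delta_differentiable_at :: "real set \<Rightarrow> (real \<Rightarrow> real) \<Rightarrow> real \<Rightarrow> bool" where
  "delta_differentiable_at TS f t \<longleftrightarrow> (\<exists>D. has_delta_deriv TS f D t)"

definition delta_differentiable_on :: "real set \<Rightarrow> (real \<Rightarrow> real) \<Rightarrow> bool" where
  "delta_differentiable_on TS f \<longleftrightarrow> (\<forall>t\<in>TS. delta_differentiable_at TS f t)"

definition delta_deriv :: "real set \<Rightarrow> (real \<Rightarrow> real) \<Rightarrow> real \<Rightarrow> real" where
  "delta_deriv TS f t = (THE D. has_delta_deriv TS f D t)"

end

theory Submission
  imports Defs "HOL-Analysis.Elementary_Metric_Spaces"
begin

(* Write U m t = u(m dx, t) and c = k/dx.  Problem (P) is the lattice system
   U_m^Delta = -c (U_m - U_(m-1)), U_0(0) = A, U_m(0) = 0 for m <> 0, and (TS1) reads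
   c mu(t) < 1.  The basic tool is "time-scale induction": a property holding at 0 that
   survives jumps, extends to the right of right-dense points and passes to left-dense
   limits holds everywhere.  From it we derive mean value inequalities and a positivity
   (Gronwall-type) principle for delta derivatives.  The theorem then follows in 3 stages:
   1. U_m = 0 for m < 0: if these sites vanish at r, their common bound halves on
      [r, r + 1/(4c)) by the mean value inequality, so they vanish there too.
   2. U_m >= 0 for m >= 0, by induction on m using the positivity principle and (TS1).
   3. The partial mass S_N = sum_(m<=N) U_m has S_N^Delta = -c U_N <= 0, so S_N <= A;
      the first moment W_N = sum_(m<=N) m U_m grows at rate <= c A, so U_N <= c A t / N
      and S_N >= A - c^2 A t^2 / N.  Letting N -> oo gives sum_m U_m(t) = A.
   The file develops the calculus on time scales first, then the three stages inside a
   locale describing the lattice system, and finally instantiates the locale. *)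

text \<open>The time scales considered here have sup = +oo; this makes every forward jump finite.\<close>
abbreviation unbounded_above :: "real set \<Rightarrow> bool" where
  "unbounded_above TS \<equiv> (\<forall>B. \<exists>t\<in>TS. t > B)"

lemma le_zero_if_le_eps_mult:
  fixes x y :: real
  assumes "y \<ge> 0" "\<And>e. e > 0 \<Longrightarrow> x \<le> e * y"
  shows "x \<le> 0"
proof (rule field_le_epsilon)
  fix e :: real assume e: "e > 0"
  have "e / (y+1) > 0" using e assms(1) by simp
  then have "x \<le> (e / (y+1)) * y" using assms(2) by blast
  also have "\<dots> \<le> e" using e assms(1) by (simp add: field_simps)
  finally show "x \<le> 0 + e" by simp
qed

lemma fwd_jump_set:
  assumes "unbounded_above TS"
  shows "{s\<in>TS. s > t} \<noteq> {}" "bdd_below {s\<in>TS. s > t}"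
proof -
  obtain s where "s \<in> TS" "s > t" using assms by blast
  then show "{s\<in>TS. s > t} \<noteq> {}" by blast
  show "bdd_below {s\<in>TS. s > t}" by (rule bdd_belowI[of _ t]) simp
qed

lemma fwd_jump_ge: "unbounded_above TS \<Longrightarrow> t \<le> fwd_jump TS t"
  unfolding fwd_jump_def using fwd_jump_set[of TS t] by (intro cInf_greatest) auto

lemma fwd_jump_le: "unbounded_above TS \<Longrightarrow> s \<in> TS \<Longrightarrow> s > t \<Longrightarrow> fwd_jump TS t \<le> s"
  unfolding fwd_jump_def using fwd_jump_set[of TS t] by (intro cInf_lower) auto

lemma right_dense_approach:
  assumes "unbounded_above TS" "fwd_jump TS t = t" "\<delta> > 0"
  shows "\<exists>s\<in>TS. t < s \<and> s < t + \<delta>"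
proof -
  have "Inf {s\<in>TS. s > t} < t + \<delta>" using assms unfolding fwd_jump_def by simp
  then obtain s where "s \<in> {s\<in>TS. s > t}" "s < t + \<delta>"
    using cInf_lessD[OF fwd_jump_set(1)[OF assms(1)]] by blast
  then show ?thesis by auto
qed

lemma has_delta_deriv_step:
  assumes "has_delta_deriv TS f D t" "t \<in> TS"
  shows "f (fwd_jump TS t) = f t + (fwd_jump TS t - t) * D"
proof -
  have "\<bar>f (fwd_jump TS t) - f t - D * (fwd_jump TS t - t)\<bar> \<le> e * \<bar>fwd_jump TS t - t\<bar>"
    if "e > 0" for e
    using assms that unfolding has_delta_deriv_def by fastforce
  then have "\<bar>f (fwd_jump TS t) - f t - D * (fwd_jump TS t - t)\<bar> \<le> 0"
    by (rule le_zero_if_le_eps_mult[OF abs_ge_zero])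
  then show ?thesis by (simp add: algebra_simps)
qed

text \<open>The delta derivative is unique: near t there is always a point s \<noteq> sigma(t)
  (t itself if t is right-scattered, points to the right of t otherwise).\<close>
lemma has_delta_deriv_unique:
  assumes unb: "unbounded_above TS" and t: "t \<in> TS"
    and h1: "has_delta_deriv TS f D1 t" and h2: "has_delta_deriv TS f D2 t"
  shows "D1 = D2"
proof (rule ccontr)
  assume ne: "D1 \<noteq> D2"
  define e where "e = \<bar>D1 - D2\<bar> / 4"
  have e: "e > 0" using ne by (simp add: e_def)
  obtain d1 where d1: "d1 > 0" "\<forall>s\<in>TS. \<bar>t - s\<bar> < d1 \<longrightarrow>
      \<bar>f (fwd_jump TS t) - f s - D1 * (fwd_jump TS t - s)\<bar> \<le> e * \<bar>fwd_jump TS t - s\<bar>"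
    using h1 e unfolding has_delta_deriv_def by blast
  obtain d2 where d2: "d2 > 0" "\<forall>s\<in>TS. \<bar>t - s\<bar> < d2 \<longrightarrow>
      \<bar>f (fwd_jump TS t) - f s - D2 * (fwd_jump TS t - s)\<bar> \<le> e * \<bar>fwd_jump TS t - s\<bar>"
    using h2 e unfolding has_delta_deriv_def by blast
  have "\<exists>s\<in>TS. \<bar>t - s\<bar> < min d1 d2 \<and> fwd_jump TS t \<noteq> s"
  proof (cases "fwd_jump TS t = t")
    case True
    then obtain s where "s \<in> TS" "t < s" "s < t + min d1 d2"
      using right_dense_approach[OF unb True, of "min d1 d2"] d1 d2 by auto
    then show ?thesis using True by (intro bexI[of _ s]) auto
  next
    case False
    then show ?thesis using t d1 d2 by (intro bexI[of _ t]) auto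
  qed
  then obtain s where s: "s \<in> TS" "\<bar>t - s\<bar> < d1" "\<bar>t - s\<bar> < d2" "fwd_jump TS t \<noteq> s"
    by auto
  define a where "a = fwd_jump TS t - s"
  have a: "\<bar>a\<bar> > 0" using s(4) by (simp add: a_def)
  have "\<bar>f (fwd_jump TS t) - f s - D1 * a\<bar> \<le> e * \<bar>a\<bar>" using d1 s by (simp add: a_def)
  moreover have "\<bar>f (fwd_jump TS t) - f s - D2 * a\<bar> \<le> e * \<bar>a\<bar>" using d2 s by (simp add: a_def)
  ultimately have "\<bar>(D1 - D2) * a\<bar> \<le> 2 * e * \<bar>a\<bar>" by (simp add: abs_le_iff algebra_simps)
  then have "\<bar>D1 - D2\<bar> * \<bar>a\<bar> \<le> (\<bar>D1 - D2\<bar> / 2) * \<bar>a\<bar>" by (simp add: e_def abs_mult)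
  then have "\<bar>D1 - D2\<bar> \<le> \<bar>D1 - D2\<bar> / 2" by (subst (asm) mult_le_cancel_right_pos[OF a])
  then show False using ne by simp
qed

lemma has_delta_deriv_delta_deriv:
  assumes "unbounded_above TS" "t \<in> TS" "delta_differentiable_at TS f t"
  shows "has_delta_deriv TS f (delta_deriv TS f t) t"
proof -
  obtain D where D: "has_delta_deriv TS f D t"
    using assms(3) unfolding delta_differentiable_at_def by blast
  have "delta_deriv TS f t = D" unfolding delta_deriv_def
    by (rule the_equality) (auto intro: D dest: has_delta_deriv_unique[OF assms(1,2) D])
  then show ?thesis using D by simp
qed

lemma has_delta_deriv_continuous:
  assumes h: "has_delta_deriv TS f D t" and t: "t \<in> TS" and unb: "unbounded_above TS"
    and e: "e > 0"
  shows "\<exists>\<delta>>0. \<forall>s\<in>TS. \<bar>t - s\<bar> < \<delta> \<longrightarrow> \<bar>f s - f t\<bar> < e"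
proof -
  define \<mu> where "\<mu> = fwd_jump TS t - t"
  have mu: "\<mu> \<ge> 0" using fwd_jump_ge[OF unb, of t] by (simp add: \<mu>_def)
  define ep where "ep = e / (2 * (2 * \<mu> + 1))"
  have ep: "ep > 0" using e mu by (simp add: ep_def)
  have ep_mu: "ep * (2 * \<mu> + 1) = e / 2" using mu by (simp add: ep_def field_simps)
  obtain d where d: "d > 0" "\<forall>s\<in>TS. \<bar>t - s\<bar> < d \<longrightarrow>
      \<bar>f (fwd_jump TS t) - f s - D * (fwd_jump TS t - s)\<bar> \<le> ep * \<bar>fwd_jump TS t - s\<bar>"
    using h ep unfolding has_delta_deriv_def by blast
  define d' where "d' = min d (min 1 (e / (2 * (\<bar>D\<bar> + 1))))"
  have d': "d' > 0" using d e by (simp add: d'_def)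
  have "\<bar>f s - f t\<bar> < e" if s: "s \<in> TS" "\<bar>t - s\<bar> < d'" for s
  proof -
    have st: "\<bar>t - s\<bar> < d" "\<bar>t - s\<bar> < 1" "\<bar>t - s\<bar> < e / (2 * (\<bar>D\<bar> + 1))"
      using s by (auto simp: d'_def)
    have 1: "\<bar>f (fwd_jump TS t) - f s - D * (fwd_jump TS t - s)\<bar> \<le> ep * \<bar>fwd_jump TS t - s\<bar>"
      using d st s by blast
    have 2: "\<bar>f (fwd_jump TS t) - f t - D * (fwd_jump TS t - t)\<bar> \<le> ep * \<mu>"
      using d t mu unfolding \<mu>_def by (metis abs_of_nonneg diff_self abs_zero)
    have "\<bar>fwd_jump TS t - s\<bar> \<le> \<mu> + 1" using mu st unfolding \<mu>_def by arith
    then have "ep * \<bar>fwd_jump TS t - s\<bar> \<le> ep * (\<mu> + 1)" using ep by simp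
    then have "\<bar>f s - f t - D * (s - t)\<bar> \<le> ep * (\<mu> + 1) + ep * \<mu>"
      using 1 2 by (simp add: abs_le_iff algebra_simps)
    then have A: "\<bar>f s - f t - D * (s - t)\<bar> \<le> e / 2"
      using ep_mu by (simp add: algebra_simps)
    have "\<bar>D * (s - t)\<bar> = \<bar>D\<bar> * \<bar>t - s\<bar>" by (simp add: abs_mult abs_minus_commute)
    also have "\<dots> \<le> \<bar>D\<bar> * (e / (2 * (\<bar>D\<bar> + 1)))" using st by (intro mult_left_mono) auto
    also have "\<dots> < e / 2" using e by (simp add: field_simps)
    finally show ?thesis using A by arith
  qed
  then show ?thesis using d' by blast
qed

lemma right_dense_increment:
  assumes "has_delta_deriv TS f D r" "fwd_jump TS r = r" "e > 0"
  shows "\<exists>\<delta>>0. \<forall>s\<in>TS. r \<le> s \<and> s < r + \<delta> \<longrightarrow> f s - f r \<ge> (D - e) * (s - r)"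
proof -
  obtain d where d: "d > 0" "\<forall>s\<in>TS. \<bar>r - s\<bar> < d \<longrightarrow>
      \<bar>f (fwd_jump TS r) - f s - D * (fwd_jump TS r - s)\<bar> \<le> e * \<bar>fwd_jump TS r - s\<bar>"
    using assms(1,3) unfolding has_delta_deriv_def by blast
  have "f s - f r \<ge> (D - e) * (s - r)" if s: "s \<in> TS" "r \<le> s" "s < r + d" for s
  proof -
    have "\<bar>f r - f s - D * (r - s)\<bar> \<le> e * (s - r)" using d s assms(2) by auto
    then show ?thesis by (simp add: abs_le_iff algebra_simps)
  qed
  then show ?thesis using d(1) by blast
qed

lemma left_dense_lower_bound:
  assumes unb: "unbounded_above TS" and r: "r \<in> TS" and f: "has_delta_deriv TS f D r"
    and ar: "a < r" and ld: "\<forall>\<delta>>0. \<exists>s\<in>TS. r - \<delta> < s \<and> s < r"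
    and bound: "\<And>s. s \<in> TS \<Longrightarrow> a \<le> s \<Longrightarrow> s < r \<Longrightarrow> y \<le> f s"
  shows "y \<le> f r"
proof (rule field_le_epsilon)
  fix e :: real assume e: "e > 0"
  obtain d where d: "d > 0" "\<forall>s\<in>TS. \<bar>r - s\<bar> < d \<longrightarrow> \<bar>f s - f r\<bar> < e"
    using has_delta_deriv_continuous[OF f r unb e] by blast
  obtain s where s: "s \<in> TS" "r - min d (r - a) < s" "s < r"
    using ld d ar by (meson min_less_iff_conj diff_gt_0_iff_gt)
  have "y \<le> f s" using bound s by simp
  moreover have "\<bar>f s - f r\<bar> < e" using d s by auto
  ultimately show "y \<le> f r + e" by simp
qed

lemma has_delta_deriv_lin:
  assumes hf: "has_delta_deriv TS f D t" and hg: "has_delta_deriv TS g E t"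
  shows "has_delta_deriv TS (\<lambda>s. a * f s + b * g s) (a * D + b * E) t"
  unfolding has_delta_deriv_def
proof (intro allI impI)
  fix e :: real assume e: "e > 0"
  define ep where "ep = e / (\<bar>a\<bar> + \<bar>b\<bar> + 1)"
  have ep: "ep > 0" using e by (simp add: ep_def add_pos_nonneg)
  obtain d1 where d1: "d1 > 0" "\<forall>s\<in>TS. \<bar>t - s\<bar> < d1 \<longrightarrow>
      \<bar>f (fwd_jump TS t) - f s - D * (fwd_jump TS t - s)\<bar> \<le> ep * \<bar>fwd_jump TS t - s\<bar>"
    using hf ep unfolding has_delta_deriv_def by blast
  obtain d2 where d2: "d2 > 0" "\<forall>s\<in>TS. \<bar>t - s\<bar> < d2 \<longrightarrow>
      \<bar>g (fwd_jump TS t) - g s - E * (fwd_jump TS t - s)\<bar> \<le> ep * \<bar>fwd_jump TS t - s\<bar>"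
    using hg ep unfolding has_delta_deriv_def by blast
  have "\<bar>a * f (fwd_jump TS t) + b * g (fwd_jump TS t) - (a * f s + b * g s)
          - (a * D + b * E) * (fwd_jump TS t - s)\<bar> \<le> e * \<bar>fwd_jump TS t - s\<bar>"
    if s: "s \<in> TS" "\<bar>t - s\<bar> < min d1 d2" for s
  proof -
    define X where "X = f (fwd_jump TS t) - f s - D * (fwd_jump TS t - s)"
    define Y where "Y = g (fwd_jump TS t) - g s - E * (fwd_jump TS t - s)"
    define w where "w = \<bar>fwd_jump TS t - s\<bar>"
    have X: "\<bar>X\<bar> \<le> ep * w" using d1 s by (simp add: X_def w_def)
    have Y: "\<bar>Y\<bar> \<le> ep * w" using d2 s by (simp add: Y_def w_def)
    have "a * f (fwd_jump TS t) + b * g (fwd_jump TS t) - (a * f s + b * g s)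
          - (a * D + b * E) * (fwd_jump TS t - s) = a * X + b * Y"
      by (simp add: X_def Y_def algebra_simps)
    also have "\<bar>\<dots>\<bar> \<le> \<bar>a\<bar> * \<bar>X\<bar> + \<bar>b\<bar> * \<bar>Y\<bar>" by (metis abs_mult abs_triangle_ineq)
    also have "\<dots> \<le> \<bar>a\<bar> * (ep * w) + \<bar>b\<bar> * (ep * w)"
      using X Y by (intro add_mono mult_left_mono) auto
    also have "\<dots> \<le> (\<bar>a\<bar> + \<bar>b\<bar> + 1) * ep * w" using ep by (simp add: w_def algebra_simps)
    also have "\<dots> = e * w" by (simp add: ep_def add_pos_nonneg)
    finally show ?thesis by (simp add: w_def)
  qed
  then show "\<exists>\<delta>>0. \<forall>s\<in>TS. \<bar>t - s\<bar> < \<delta> \<longrightarrow>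
      \<bar>a * f (fwd_jump TS t) + b * g (fwd_jump TS t) - (a * f s + b * g s)
        - (a * D + b * E) * (fwd_jump TS t - s)\<bar> \<le> e * \<bar>fwd_jump TS t - s\<bar>"
    using d1(1) d2(1) by (intro exI[of _ "min d1 d2"]) auto
qed

lemma has_delta_deriv_const: "has_delta_deriv TS (\<lambda>s. c) 0 t"
  unfolding has_delta_deriv_def by (auto intro!: exI[of _ 1])

lemma has_delta_deriv_ident: "has_delta_deriv TS (\<lambda>s. s) 1 t"
  unfolding has_delta_deriv_def by (auto intro!: exI[of _ 1])

lemma has_delta_deriv_cmult:
  "has_delta_deriv TS f D t \<Longrightarrow> has_delta_deriv TS (\<lambda>s. a * f s) (a * D) t"
  using has_delta_deriv_lin[of TS f D t "\<lambda>s. 0" 0 a 0] has_delta_deriv_const[of TS 0 t] by simp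

lemma has_delta_deriv_sum:
  assumes "finite I" "\<And>i. i \<in> I \<Longrightarrow> has_delta_deriv TS (f i) (D i) t"
  shows "has_delta_deriv TS (\<lambda>s. \<Sum>i\<in>I. f i s) (\<Sum>i\<in>I. D i) t"
  using assms
proof (induction I rule: finite_induct)
  case empty then show ?case using has_delta_deriv_const[of TS 0 t] by simp
next
  case (insert x F)
  then show ?case
    using has_delta_deriv_lin[of TS "f x" "D x" t "\<lambda>s. \<Sum>i\<in>F. f i s" "\<Sum>i\<in>F. D i" 1 1]
    by simp
qed

lemma left_scattered_is_fwd_jump:
  assumes unb: "unbounded_above TS" and cl: "closed TS"
    and a: "a \<in> TS" and t: "t \<in> TS" "a < t"
    and ls: "\<not> (\<forall>\<delta>>0. \<exists>s\<in>TS. t - \<delta> < s \<and> s < t)"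
  shows "\<exists>p\<in>TS. a \<le> p \<and> p < t \<and> fwd_jump TS p = t"
proof -
  obtain \<delta> where \<delta>: "\<delta> > 0" "\<forall>s\<in>TS. \<not> (t - \<delta> < s \<and> s < t)" using ls by auto
  define G where "G = {s\<in>TS. a \<le> s \<and> s < t}"
  have Gne: "G \<noteq> {}" using a t by (auto simp: G_def)
  have Gbdd: "bdd_above G" by (auto simp: G_def bdd_above_def intro: less_imp_le)
  define p where "p = Sup G"
  have pTS: "p \<in> TS"
    unfolding p_def using Gne Gbdd cl by (intro closed_subset_contains_Sup) (auto simp: G_def)
  have pG: "x \<le> p" if "x \<in> G" for x unfolding p_def using that Gbdd by (rule cSup_upper)
  have pa: "a \<le> p" using pG[of a] a t by (auto simp: G_def)
  have pt: "p \<le> t - \<delta>" unfolding p_def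
    by (rule cSup_least[OF Gne]) (use \<delta> in \<open>auto simp: G_def not_less\<close>)
  have "fwd_jump TS p \<le> t" using fwd_jump_le[OF unb t(1), of p] pt \<delta> by simp
  moreover have "t \<le> fwd_jump TS p" unfolding fwd_jump_def
  proof (rule cInf_greatest)
    show "{s \<in> TS. p < s} \<noteq> {}" using fwd_jump_set(1)[OF unb] .
    fix x assume x: "x \<in> {s \<in> TS. p < s}"
    show "t \<le> x"
    proof (rule ccontr)
      assume "\<not> t \<le> x"
      then have "x \<in> G" using x pa by (auto simp: G_def)
      then show False using pG[of x] x by simp
    qed
  qed
  ultimately show ?thesis using pTS pa pt \<delta> by (intro bexI[of _ p]) auto
qed

text \<open>Left half of time-scale induction: if P holds at a, is preserved by jumps and passes
  to left-dense limits, then P holding on [a, t) forces P t (a left-scattered t is the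
  forward jump of a point in [a, t)).\<close>
lemma time_scale_induct_left:
  assumes unb: "unbounded_above TS" and cl: "closed TS" and a: "a \<in> TS" and Pa: "P a"
    and jump: "\<And>r. r \<in> TS \<Longrightarrow> a \<le> r \<Longrightarrow> fwd_jump TS r > r \<Longrightarrow> P r \<Longrightarrow>
                  P (fwd_jump TS r)"
    and left_dense: "\<And>r. r \<in> TS \<Longrightarrow> a < r \<Longrightarrow> (\<forall>\<delta>>0. \<exists>s\<in>TS. r - \<delta> < s \<and> s < r) \<Longrightarrow>
                  (\<forall>s\<in>TS. a \<le> s \<and> s < r \<longrightarrow> P s) \<Longrightarrow> P r"
    and t: "t \<in> TS" "a \<le> t" and below: "\<forall>s\<in>TS. a \<le> s \<and> s < t \<longrightarrow> P s"
  shows "P t"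
proof (cases "t = a")
  case False
  then have at: "a < t" using t by simp
  show ?thesis
  proof (cases "\<forall>\<delta>>0. \<exists>s\<in>TS. t - \<delta> < s \<and> s < t")
    case True
    then show ?thesis using left_dense[OF t(1) at True] below by blast
  next
    case False
    then obtain p where "p \<in> TS" "a \<le> p" "p < t" "fwd_jump TS p = t"
      using left_scattered_is_fwd_jump[OF unb cl a t(1) at] by blast
    then show ?thesis using jump[of p] below by simp
  qed
qed (use Pa in simp)

text \<open>The infimum t0 of the
  counterexamples satisfies P by the left half, and then so does a right neighbourhood
  of t0 -- a contradiction.\<close>
lemma time_scale_induct:
  assumes unb: "unbounded_above TS" and cl: "closed TS" and a: "a \<in> TS" and Pa: "P a"
    and jump: "\<And>r. r \<in> TS \<Longrightarrow> a \<le> r \<Longrightarrow> fwd_jump TS r > r \<Longrightarrow> P r \<Longrightarrow>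
                  P (fwd_jump TS r)"
    and right_dense: "\<And>r. r \<in> TS \<Longrightarrow> a \<le> r \<Longrightarrow> fwd_jump TS r = r \<Longrightarrow> P r \<Longrightarrow>
                  \<exists>\<delta>>0. \<forall>s\<in>TS. r \<le> s \<and> s < r + \<delta> \<longrightarrow> P s"
    and left_dense: "\<And>r. r \<in> TS \<Longrightarrow> a < r \<Longrightarrow> (\<forall>\<delta>>0. \<exists>s\<in>TS. r - \<delta> < s \<and> s < r) \<Longrightarrow>
                  (\<forall>s\<in>TS. a \<le> s \<and> s < r \<longrightarrow> P s) \<Longrightarrow> P r"
    and r: "r \<in> TS" "a \<le> r"
  shows "P r"
proof (rule ccontr)
  assume nPr: "\<not> P r"
  define F where "F = {r\<in>TS. a \<le> r \<and> \<not> P r}"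
  have Fne: "F \<noteq> {}" using r nPr by (auto simp: F_def)
  have Fbdd: "bdd_below F" by (auto simp: F_def bdd_below_def)
  define t0 where "t0 = Inf F"
  have t0TS: "t0 \<in> TS"
    unfolding t0_def using Fne Fbdd cl by (intro closed_subset_contains_Inf) (auto simp: F_def)
  have t0a: "a \<le> t0" unfolding t0_def using Fne by (intro cInf_greatest) (auto simp: F_def)
  have t0low: "t0 \<le> x" if "x \<in> F" for x unfolding t0_def using that Fbdd by (rule cInf_lower)
  have "\<forall>s\<in>TS. a \<le> s \<and> s < t0 \<longrightarrow> P s" using t0low by (force simp: F_def)
  then have Pt0: "P t0"
    using time_scale_induct_left[OF unb cl a, where P = P and t = t0] Pa jump left_dense t0TS t0a
    by blast
  have Fgt: "x > t0" if "x \<in> F" for x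
    using t0low[OF that] that Pt0 by (cases "x = t0") (auto simp: F_def)
  show False
  proof (cases "fwd_jump TS t0 = t0")
    case False
    then have sg: "fwd_jump TS t0 > t0" using fwd_jump_ge[OF unb, of t0] by simp
    have "fwd_jump TS t0 \<le> Inf F"
      by (rule cInf_greatest[OF Fne]) (use fwd_jump_le[OF unb] Fgt in \<open>auto simp: F_def\<close>)
    then show False using sg by (simp add: t0_def)
  next
    case True
    obtain \<delta> where \<delta>: "\<delta> > 0" "\<forall>s\<in>TS. t0 \<le> s \<and> s < t0 + \<delta> \<longrightarrow> P s"
      using right_dense[OF t0TS t0a True Pt0] by blast
    have "t0 + \<delta> \<le> Inf F"
    proof (rule cInf_greatest[OF Fne])
      fix x assume x: "x \<in> F"
      show "t0 + \<delta> \<le> x"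
        using \<delta> x Fgt[OF x] by (auto simp: F_def t0_def not_le[symmetric])
    qed
    then show False using \<delta> by (simp add: t0_def)
  qed
qed

text \<open>A function with positive delta derivative on [a, b) satisfies g a \<le> g b: jumps increase
  g, right-dense points have increasing right neighbourhoods, and the bound g a \<le> g s
  passes to left-dense limits.\<close>
lemma delta_nondecreasing:
  assumes unb: "unbounded_above TS" and cl: "closed TS" and a: "a \<in> TS" and b: "b \<in> TS"
    and ab: "a \<le> b"
    and diff: "\<And>r. r \<in> TS \<Longrightarrow> a \<le> r \<Longrightarrow> r \<le> b \<Longrightarrow> has_delta_deriv TS g (G r) r"
    and pos: "\<And>r. r \<in> TS \<Longrightarrow> a \<le> r \<Longrightarrow> r < b \<Longrightarrow> G r > 0"
  shows "g a \<le> g b"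
proof -
  define P where "P = (\<lambda>r. r \<le> b \<longrightarrow> g a \<le> g r)"
  have "P b"
  proof (rule time_scale_induct[OF unb cl a, of P])
    fix r assume r: "r \<in> TS" "a \<le> r" "fwd_jump TS r > r" "P r"
    show "P (fwd_jump TS r)" unfolding P_def
    proof
      assume "fwd_jump TS r \<le> b"
      then have rb: "r < b" using r by simp
      have "g (fwd_jump TS r) = g r + (fwd_jump TS r - r) * G r"
        using has_delta_deriv_step[OF diff[OF r(1,2)] r(1)] rb by simp
      moreover have "(fwd_jump TS r - r) * G r \<ge> 0" using pos[OF r(1,2) rb] r(3) by simp
      ultimately show "g a \<le> g (fwd_jump TS r)" using r(4) rb by (simp add: P_def)
    qed
  next
    fix r assume r: "r \<in> TS" "a \<le> r" "fwd_jump TS r = r" "P r"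
    show "\<exists>\<delta>>0. \<forall>s\<in>TS. r \<le> s \<and> s < r + \<delta> \<longrightarrow> P s"
    proof (cases "r < b")
      case True
      obtain d where "d > 0" "\<forall>s\<in>TS. r \<le> s \<and> s < r + d \<longrightarrow> g s - g r \<ge> (G r - G r) * (s - r)"
        using right_dense_increment[OF diff[OF r(1,2)] r(3) pos[OF r(1,2) True]] True by auto
      then show ?thesis using r(4) True by (intro exI[of _ d]) (auto simp: P_def)
    next
      case False
      then have "P s" if "s \<in> TS" "r \<le> s" for s
        using that r(4) unfolding P_def by (cases "s = r") auto
      then show ?thesis by (intro exI[of _ 1]) auto
    qed
  next
    fix r assume r: "r \<in> TS" "a < r" "\<forall>\<delta>>0. \<exists>s\<in>TS. r - \<delta> < s \<and> s < r"
      and below: "\<forall>s\<in>TS. a \<le> s \<and> s < r \<longrightarrow> P s"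
    show "P r" unfolding P_def
    proof
      assume rb: "r \<le> b"
      show "g a \<le> g r"
        by (rule left_dense_lower_bound[OF unb r(1) diff[OF r(1) _ rb] r(2,3)])
          (use below rb r in \<open>auto simp: P_def\<close>)
    qed
  qed (use b ab in \<open>auto simp: P_def\<close>)
  then show ?thesis by (simp add: P_def)
qed

text \<open>Mean value inequality: delta derivative \<ge> -L on [a, b) implies f b - f a \<ge> -L (b - a).
  For every eps > 0, f + (L + eps) id has positive derivative, hence is nondecreasing.\<close>
lemma delta_mvt_lower:
  assumes unb: "unbounded_above TS" and cl: "closed TS" and a: "a \<in> TS" and b: "b \<in> TS"
    and ab: "a \<le> b"
    and diff: "\<And>r. r \<in> TS \<Longrightarrow> a \<le> r \<Longrightarrow> r \<le> b \<Longrightarrow> has_delta_deriv TS f (F r) r"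
    and bnd: "\<And>r. r \<in> TS \<Longrightarrow> a \<le> r \<Longrightarrow> r < b \<Longrightarrow> F r \<ge> - L"
  shows "f b - f a \<ge> - L * (b - a)"
proof -
  have "f a - f b - L * (b - a) \<le> 0"
  proof (rule le_zero_if_le_eps_mult[of "b - a"])
    fix e :: real assume e: "e > 0"
    have "(\<lambda>s. 1 * f s + (L + e) * s) a \<le> (\<lambda>s. 1 * f s + (L + e) * s) b"
    proof (rule delta_nondecreasing[OF unb cl a b ab])
      fix r assume "r \<in> TS" "a \<le> r" "r \<le> b"
      then show "has_delta_deriv TS (\<lambda>s. 1 * f s + (L + e) * s) (1 * F r + (L + e) * 1) r"
        by (intro has_delta_deriv_lin diff has_delta_deriv_ident)
    next
      fix r assume "r \<in> TS" "a \<le> r" "r < b"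
      then show "1 * F r + (L + e) * 1 > 0" using bnd e by force
    qed
    then show "f a - f b - L * (b - a) \<le> e * (b - a)" by (simp add: algebra_simps)
  qed (use ab in simp)
  then show ?thesis by (simp add: algebra_simps)
qed

lemma delta_mvt_upper:
  assumes unb: "unbounded_above TS" and cl: "closed TS" and a: "a \<in> TS" and b: "b \<in> TS"
    and ab: "a \<le> b"
    and diff: "\<And>r. r \<in> TS \<Longrightarrow> a \<le> r \<Longrightarrow> r \<le> b \<Longrightarrow> has_delta_deriv TS f (F r) r"
    and bnd: "\<And>r. r \<in> TS \<Longrightarrow> a \<le> r \<Longrightarrow> r < b \<Longrightarrow> F r \<le> L"
  shows "f b - f a \<le> L * (b - a)"
proof -
  have "(\<lambda>s. - f s) b - (\<lambda>s. - f s) a \<ge> - L * (b - a)"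
  proof (rule delta_mvt_lower[OF unb cl a b ab, where F = "\<lambda>r. - F r"])
    fix r assume "r \<in> TS" "a \<le> r" "r \<le> b"
    then show "has_delta_deriv TS (\<lambda>s. - f s) (- F r) r"
      using has_delta_deriv_cmult[OF diff, of r "-1"] by simp
  qed (use bnd in force)
  then show ?thesis by simp
qed

lemma delta_mvt_abs:
  assumes unb: "unbounded_above TS" and cl: "closed TS" and a: "a \<in> TS" and b: "b \<in> TS"
    and ab: "a \<le> b"
    and diff: "\<And>r. r \<in> TS \<Longrightarrow> a \<le> r \<Longrightarrow> r \<le> b \<Longrightarrow> has_delta_deriv TS f (F r) r"
    and bnd: "\<And>r. r \<in> TS \<Longrightarrow> a \<le> r \<Longrightarrow> r < b \<Longrightarrow> \<bar>F r\<bar> \<le> L"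
  shows "\<bar>f b - f a\<bar> \<le> L * (b - a)"
proof -
  have "- L * (b - a) \<le> f b - f a"
    by (rule delta_mvt_lower[OF unb cl a b ab, where F = F]) (use diff bnd in \<open>force+\<close>)
  moreover have "f b - f a \<le> L * (b - a)"
    by (rule delta_mvt_upper[OF unb cl a b ab, where F = F]) (use diff bnd in \<open>force+\<close>)
  ultimately show ?thesis by (simp add: abs_le_iff)
qed

text \<open>Positivity (a Gronwall-type lemma): if f^Delta \<ge> -c f with c mu(t) < 1, then
  f(a) \<ge> 0 implies f \<ge> 0 on [a, oo).  Jumps multiply f by at least 1 - c mu \<ge> 0; the
  lemma shows f \<ge> -eps for every eps > 0 by time-scale induction.\<close>
lemma delta_nonneg_propagation:
  assumes unb: "unbounded_above TS" and cl: "closed TS" and a: "a \<in> TS" and c: "c > 0"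
    and diff: "\<And>r. r \<in> TS \<Longrightarrow> a \<le> r \<Longrightarrow> has_delta_deriv TS f (F r) r"
    and bnd: "\<And>r. r \<in> TS \<Longrightarrow> a \<le> r \<Longrightarrow> F r \<ge> - c * f r"
    and stable: "\<And>r. r \<in> TS \<Longrightarrow> a \<le> r \<Longrightarrow> c * graininess TS r < 1"
    and fa: "f a \<ge> 0" and r: "r \<in> TS" "a \<le> r"
  shows "f r \<ge> 0"
proof -
  have "f r \<ge> - \<epsilon>" if eps: "\<epsilon> > 0" for \<epsilon>
  proof (rule time_scale_induct[OF unb cl a, of "\<lambda>r. f r \<ge> - \<epsilon>"])
    fix r assume r: "r \<in> TS" "a \<le> r" "fwd_jump TS r > r" "f r \<ge> - \<epsilon>"
    define m where "m = fwd_jump TS r - r"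
    have m: "m > 0" and cm: "c * m < 1"
      using r stable[OF r(1,2)] by (simp_all add: m_def graininess_def)
    have "m * F r \<ge> m * (- c * f r)" using bnd[OF r(1,2)] m by (intro mult_left_mono) auto
    then have step: "f (fwd_jump TS r) \<ge> (1 - c * m) * f r"
      using has_delta_deriv_step[OF diff[OF r(1,2)] r(1)] by (simp add: m_def algebra_simps)
    have "(1 - c * m) * f r \<ge> min 0 (f r)"
    proof (cases "f r \<ge> 0")
      case False
      have "c * m * f r \<le> 0" using False c m by (simp add: mult_nonneg_nonpos less_imp_le)
      then show ?thesis by (simp add: algebra_simps)
    qed (use cm in simp)
    then show "f (fwd_jump TS r) \<ge> - \<epsilon>" using step r(4) eps by linarith
  next
    fix r assume r: "r \<in> TS" "a \<le> r" "fwd_jump TS r = r" "f r \<ge> - \<epsilon>"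
    show "\<exists>\<delta>>0. \<forall>s\<in>TS. r \<le> s \<and> s < r + \<delta> \<longrightarrow> f s \<ge> - \<epsilon>"
    proof (cases "f r > - \<epsilon>")
      case True
      then obtain d where d: "d > 0" "\<forall>s\<in>TS. \<bar>r - s\<bar> < d \<longrightarrow> \<bar>f s - f r\<bar> < f r + \<epsilon>"
        using has_delta_deriv_continuous[OF diff[OF r(1,2)] r(1) unb, of "f r + \<epsilon>"] by auto
      then show ?thesis by (intro exI[of _ d]) force
    next
      case False
      then have fr: "f r = - \<epsilon>" using r(4) by simp
      have "F r \<ge> c * \<epsilon>" using bnd[OF r(1,2)] fr by simp
      then have Fpos: "F r > 0" using c eps by (smt (verit) mult_pos_pos)
      obtain d where "d > 0" "\<forall>s\<in>TS. r \<le> s \<and> s < r + d \<longrightarrow> f s - f r \<ge> (F r - F r) * (s - r)"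
        using right_dense_increment[OF diff[OF r(1,2)] r(3) Fpos] by blast
      then show ?thesis using fr by (intro exI[of _ d]) auto
    qed
  next
    fix r assume "r \<in> TS" "a < r" "\<forall>\<delta>>0. \<exists>s\<in>TS. r - \<delta> < s \<and> s < r"
      "\<forall>s\<in>TS. a \<le> s \<and> s < r \<longrightarrow> f s \<ge> - \<epsilon>"
    then show "f r \<ge> - \<epsilon>"
      using left_dense_lower_bound[OF unb _ diff, of r a "- \<epsilon>"] by auto
  qed (use fa eps r in auto)
  from this[of "- f r / 2"] show ?thesis by (cases "f r \<ge> 0") auto
qed

lemma zero_if_le_halvings:
  fixes x B :: real
  assumes "x \<ge> 0" "\<And>n::nat. x \<le> B / 2 ^ n"
  shows "x = 0"
proof (rule ccontr)
  assume "x \<noteq> 0"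
  then have xp: "x > 0" using assms(1) by simp
  obtain n :: nat where "B / x < 2 ^ n" using real_arch_pow[of 2 "B / x"] by auto
  then have "B / 2 ^ n < x" using xp by (simp add: divide_less_eq mult.commute)
  then show False using assms(2)[of n] by simp
qed

lemma sum_by_parts:
  fixes g :: "nat \<Rightarrow> real"
  shows "(\<Sum>m\<le>N. real m * (g (Suc m) - g m)) = real N * g (Suc N) - (\<Sum>m<N. g (Suc m))"
  by (induction N) (simp_all add: algebra_simps)

text \<open>The upwind lattice system on a time scale starting at 0: U m is the value at the
  m-th lattice site, c = k/dx, and (TS1) reads c mu(t) < 1.\<close>
locale upwind_system =
  fixes TS :: "real set" and c A :: real and U :: "int \<Rightarrow> real \<Rightarrow> real"
  assumes TS_closed: "closed TS" and TS_unbounded: "unbounded_above TS"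
    and zero_in_TS: "0 \<in> TS" and TS_nonneg: "\<And>t. t \<in> TS \<Longrightarrow> 0 \<le> t"
    and c_pos: "c > 0" and A_nonneg: "A \<ge> 0"
    and stable: "\<And>t. t \<in> TS \<Longrightarrow> c * graininess TS t < 1"
    and U_deriv: "\<And>m t. t \<in> TS \<Longrightarrow> has_delta_deriv TS (U m) (- c * (U m t - U (m - 1) t)) t"
    and U_init0: "U 0 0 = A" and U_init: "\<And>m. m \<noteq> 0 \<Longrightarrow> U m 0 = 0"
    and U_bounded: "\<And>T. T > 0 \<Longrightarrow> \<exists>B. \<forall>m. \<forall>t\<in>TS. t \<le> T \<longrightarrow> \<bar>U m t\<bar> \<le> B"
begin

text \<open>If all sites m < 0 vanish at r, then on [r, r + min 1 (1/(4c))) their common bound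
  halves at each step: |U m - U m r| \<le> 2cK times the length if |U m|, |U (m-1)| \<le> K.\<close>
lemma negative_sites_halving:
  assumes r: "r \<in> TS" and zero_r: "\<forall>m<0. U m r = 0"
    and B: "\<forall>m. \<forall>t\<in>TS. t \<le> r + 1 \<longrightarrow> \<bar>U m t\<bar> \<le> B"
  shows "\<forall>m<0. \<forall>s\<in>TS. r \<le> s \<and> s < r + min 1 (1 / (4 * c)) \<longrightarrow> \<bar>U m s\<bar> \<le> B / 2 ^ n"
proof (induction n)
  case 0
  then show ?case using B by auto
next
  case (Suc n)
  define K where "K = B / 2 ^ n"
  have "\<bar>U 0 r\<bar> \<le> B" using B r by simp
  then have K: "K \<ge> 0" by (simp add: K_def)
  have "\<bar>U m s\<bar> \<le> K / 2"
    if m: "m < 0" and s: "s \<in> TS" "r \<le> s" "s < r + min 1 (1 / (4 * c))" for m s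
  proof -
    have "\<bar>U m s - U m r\<bar> \<le> (2 * c * K) * (s - r)"
    proof (rule delta_mvt_abs[OF TS_unbounded TS_closed r s(1,2)])
      fix x assume x: "x \<in> TS" "r \<le> x" "x < s"
      have "\<bar>U m x\<bar> \<le> K" "\<bar>U (m - 1) x\<bar> \<le> K" using Suc.IH m x s by (auto simp: K_def)
      then have "c * \<bar>U m x - U (m - 1) x\<bar> \<le> c * (2 * K)" using c_pos by (intro mult_left_mono) auto
      then show "\<bar>- c * (U m x - U (m - 1) x)\<bar> \<le> 2 * c * K" using c_pos by (simp add: abs_mult)
    qed (use U_deriv c_pos K in auto)
    also have "\<dots> \<le> (2 * c * K) * (1 / (4 * c))" using s c_pos K by (intro mult_left_mono) auto
    also have "\<dots> = K / 2" using c_pos by (simp add: field_simps)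
    finally show ?thesis using zero_r m by simp
  qed
  then show ?case by (auto simp: K_def mult.commute)
qed

lemma negative_sites_vanish_right:
  assumes r: "r \<in> TS" and zero_r: "\<forall>m<0. U m r = 0"
  shows "\<exists>\<delta>>0. \<forall>s\<in>TS. r \<le> s \<and> s < r + \<delta> \<longrightarrow> (\<forall>m<0. U m s = 0)"
proof -
  obtain B where B: "\<forall>m. \<forall>t\<in>TS. t \<le> r + 1 \<longrightarrow> \<bar>U m t\<bar> \<le> B"
    using U_bounded[of "r + 1"] TS_nonneg[OF r] by auto
  have "U m s = 0" if "m < 0" "s \<in> TS" "r \<le> s" "s < r + min 1 (1 / (4 * c))" for m s
  proof -
    have "\<bar>U m s\<bar> \<le> B / 2 ^ n" for n
      using negative_sites_halving[OF r zero_r B, of n] that by blast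
    then have "\<bar>U m s\<bar> = 0" by (intro zero_if_le_halvings[of _ B]) auto
    then show ?thesis by simp
  qed
  then show ?thesis using c_pos by (intro exI[of _ "min 1 (1 / (4 * c))"]) auto
qed

lemma U_negative:
  assumes t: "t \<in> TS" and m: "m < 0"
  shows "U m t = 0"
proof -
  have "\<forall>m<0. U m t = 0"
  proof (rule time_scale_induct[OF TS_unbounded TS_closed zero_in_TS,
        where P = "\<lambda>r. \<forall>m<0. U m r = 0" and r = t])
    fix r assume r: "r \<in> TS" "0 \<le> r" "fwd_jump TS r > r" "\<forall>m<0. U m r = 0"
    show "\<forall>m<0. U m (fwd_jump TS r) = 0"
    proof (intro allI impI)
      fix m :: int assume m: "m < 0"
      have "U m (fwd_jump TS r) = U m r + (fwd_jump TS r - r) * (- c * (U m r - U (m - 1) r))"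
        by (rule has_delta_deriv_step[OF U_deriv[OF r(1)] r(1)])
      then show "U m (fwd_jump TS r) = 0" using r(4) m by simp
    qed
  next
    fix r assume "r \<in> TS" "\<forall>m<0. U m r = 0"
    then show "\<exists>\<delta>>0. \<forall>s\<in>TS. r \<le> s \<and> s < r + \<delta> \<longrightarrow> (\<forall>m<0. U m s = 0)"
      by (rule negative_sites_vanish_right)
  next
    fix r assume r: "r \<in> TS" "0 < r" "\<forall>\<delta>>0. \<exists>s\<in>TS. r - \<delta> < s \<and> s < r"
      and below: "\<forall>s\<in>TS. 0 \<le> s \<and> s < r \<longrightarrow> (\<forall>m<0. U m s = 0)"
    show "\<forall>m<0. U m r = 0"
    proof (intro allI impI)
      fix m :: int assume m: "m < 0"
      have zero_below: "\<And>s. s \<in> TS \<Longrightarrow> 0 \<le> s \<Longrightarrow> s < r \<Longrightarrow> U m s = 0"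
        using below m by blast
      have "0 \<le> U m r"
        by (rule left_dense_lower_bound[OF TS_unbounded r(1) U_deriv[OF r(1)] r(2,3)])
          (simp add: zero_below)
      moreover have "0 \<le> -1 * U m r"
        by (rule left_dense_lower_bound[OF TS_unbounded r(1)
              has_delta_deriv_cmult[OF U_deriv[OF r(1)], of "-1"] r(2,3)])
          (simp add: zero_below)
      ultimately show "U m r = 0" by simp
    qed
  qed (use U_init t TS_nonneg in simp_all)
  then show ?thesis using m by simp
qed

text \<open>Stage 2: all sites stay nonnegative, by induction along the lattice: U (n-1) \<ge> 0
  makes U n a supersolution of f^Delta = -c f.\<close>
lemma U_nonneg:
  assumes t: "t \<in> TS"
  shows "0 \<le> U (int n) t"
  using t
proof (induction n arbitrary: t)
  case (0 t)
  show ?case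
  proof (rule delta_nonneg_propagation[OF TS_unbounded TS_closed zero_in_TS c_pos U_deriv])
    fix r assume r: "r \<in> TS"
    then show "- c * U (int 0) r \<le> - c * (U (int 0) r - U (int 0 - 1) r)"
      using U_negative[OF r, of "-1"] by simp
  qed (use stable U_init0 A_nonneg 0 TS_nonneg in auto)
next
  case (Suc n t)
  show ?case
  proof (rule delta_nonneg_propagation[OF TS_unbounded TS_closed zero_in_TS c_pos U_deriv])
    fix r assume r: "r \<in> TS"
    then show "- c * U (int (Suc n)) r \<le> - c * (U (int (Suc n)) r - U (int (Suc n) - 1) r)"
      using Suc.IH[OF r] c_pos by simp
  qed (use stable U_init Suc.prems TS_nonneg in auto)
qed

definition mass :: "nat \<Rightarrow> real \<Rightarrow> real" where
  "mass N t = (\<Sum>m\<le>N. U (int m) t)"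

definition moment :: "nat \<Rightarrow> real \<Rightarrow> real" where
  "moment N t = (\<Sum>m\<le>N. real m * U (int m) t)"

text \<open>The flux terms telescope: mass only leaves through the right end N.\<close>
lemma mass_deriv:
  assumes t: "t \<in> TS"
  shows "has_delta_deriv TS (mass N) (- c * U (int N) t) t"
proof -
  define G where "G = (\<lambda>m::nat. U (int m - 1) t)"
  have "(\<Sum>m\<le>N. - c * (U (int m) t - U (int m - 1) t)) = - c * (\<Sum>m<Suc N. G (Suc m) - G m)"
    by (simp add: G_def sum_distrib_left lessThan_Suc_atMost)
  also have "\<dots> = - c * U (int N) t"
    by (simp only: sum_lessThan_telescope) (simp add: G_def U_negative[OF t])
  finally show ?thesis
    using has_delta_deriv_sum[of "{..N}" TS "\<lambda>m. U (int m)"] U_deriv[OF t]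
    unfolding mass_def by fastforce
qed

text \<open>Summation by parts: the first moment gains c U m at every site m < N and loses
  c N U N at the right end.\<close>
lemma moment_deriv:
  assumes t: "t \<in> TS"
  shows "has_delta_deriv TS (moment N) (c * (\<Sum>m<N. U (int m) t) - c * real N * U (int N) t) t"
proof -
  define G where "G = (\<lambda>m::nat. U (int m - 1) t)"
  have "(\<Sum>m\<le>N. real m * (- c * (U (int m) t - U (int m - 1) t)))
      = - c * (\<Sum>m\<le>N. real m * (G (Suc m) - G m))"
    by (simp add: G_def sum_distrib_left algebra_simps)
  also have "\<dots> = c * (\<Sum>m<N. U (int m) t) - c * real N * U (int N) t"
    by (simp only: sum_by_parts) (simp add: G_def algebra_simps)
  finally show ?thesis
    using has_delta_deriv_sum[of "{..N}" TS "\<lambda>m s. real m * U (int m) s"]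
      has_delta_deriv_cmult[OF U_deriv[OF t]]
    unfolding moment_def by fastforce
qed

lemma mass_zero: "mass N 0 = A"
  using U_init U_init0 by (simp add: mass_def atMost_atLeast0 sum.atLeast_Suc_atMost)

lemma moment_zero: "moment N 0 = 0"
proof -
  have "real m * U (int m) 0 = 0" for m by (cases "m = 0") (simp_all add: U_init)
  then show ?thesis unfolding moment_def by (intro sum.neutral) simp
qed

text \<open>The partial mass is nonincreasing, so bounded by the total initial mass.\<close>
lemma mass_le:
  assumes t: "t \<in> TS"
  shows "mass N t \<le> A"
proof -
  have "mass N t - mass N 0 \<le> 0 * (t - 0)"
  proof (rule delta_mvt_upper[OF TS_unbounded TS_closed zero_in_TS t TS_nonneg[OF t] mass_deriv])
    fix r assume "r \<in> TS"
    then show "- c * U (int N) r \<le> 0" using U_nonneg[of r N] c_pos by simp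
  qed
  then show ?thesis using mass_zero by simp
qed

text \<open>The first moment grows at most at rate c A (mass times speed).\<close>
lemma moment_le:
  assumes t: "t \<in> TS"
  shows "moment N t \<le> c * A * t"
proof -
  have "moment N t - moment N 0 \<le> (c * A) * (t - 0)"
  proof (rule delta_mvt_upper[OF TS_unbounded TS_closed zero_in_TS t TS_nonneg[OF t] moment_deriv])
    fix r assume r: "r \<in> TS"
    have "(\<Sum>m<N. U (int m) r) \<le> mass N r"
      unfolding mass_def by (rule sum_mono2) (auto intro: U_nonneg[OF r])
    then have "(\<Sum>m<N. U (int m) r) \<le> A" using mass_le[OF r, of N] by linarith
    then have "c * (\<Sum>m<N. U (int m) r) \<le> c * A" using c_pos by simp
    then show "c * (\<Sum>m<N. U (int m) r) - c * real N * U (int N) r \<le> c * A"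
      using U_nonneg[OF r, of N] c_pos by (smt (verit) mult_nonneg_nonneg of_nat_0_le_iff)
  qed (use c_pos A_nonneg in auto)
  then show ?thesis using moment_zero by simp
qed

lemma U_far_site:
  assumes t: "t \<in> TS" and N: "N \<ge> 1"
  shows "U (int N) t \<le> c * A * t / real N"
proof -
  have "real N * U (int N) t \<le> moment N t"
    unfolding moment_def
    by (rule member_le_sum[where f = "\<lambda>m. real m * U (int m) t"])
      (auto intro!: mult_nonneg_nonneg U_nonneg[OF t])
  also have "\<dots> \<le> c * A * t" by (rule moment_le[OF t])
  finally show ?thesis using N by (simp add: pos_le_divide_eq mult.commute)
qed

lemma mass_ge:
  assumes t: "t \<in> TS" and N: "N \<ge> 1"
  shows "A - c * c * A * t * t / real N \<le> mass N t"
proof -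
  have "mass N t - mass N 0 \<ge> - (c * (c * A * t / real N)) * (t - 0)"
  proof (rule delta_mvt_lower[OF TS_unbounded TS_closed zero_in_TS t TS_nonneg[OF t] mass_deriv])
    fix r assume r: "r \<in> TS" "0 \<le> r" "r < t"
    have "c * A * r / real N \<le> c * A * t / real N"
      using r c_pos A_nonneg by (intro divide_right_mono mult_left_mono) auto
    then have "U (int N) r \<le> c * A * t / real N" using U_far_site[OF r(1) N] by linarith
    then have "c * U (int N) r \<le> c * (c * A * t / real N)"
      by (rule mult_left_mono) (use c_pos in simp)
    then show "- (c * (c * A * t / real N)) \<le> - c * U (int N) r" using c_pos by simp
  qed (use c_pos A_nonneg TS_nonneg[OF t] in auto)
  then show ?thesis using mass_zero by (simp add: algebra_simps)
qed

theorem mass_conservation: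
  assumes t: "t \<in> TS"
  shows "(\<lambda>m. U (int m) t) sums A"
  unfolding sums_def_le
proof (rule tendsto_sandwich[where f = "\<lambda>N. A - c * c * A * t * t / real N" and h = "\<lambda>N. A"])
  show "\<forall>\<^sub>F N in sequentially. A - c * c * A * t * t / real N \<le> (\<Sum>m\<le>N. U (int m) t)"
    using mass_ge[OF t] by (intro eventually_sequentiallyI[of 1]) (auto simp: mass_def)
  show "\<forall>\<^sub>F N in sequentially. (\<Sum>m\<le>N. U (int m) t) \<le> A"
    using mass_le[OF t] by (simp add: mass_def)
  show "(\<lambda>N. A - c * c * A * t * t / real N) \<longlonglongrightarrow> A"
    using tendsto_diff[OF tendsto_const lim_const_over_n[of "c * c * A * t * t"], of A] by simp
qed simp

end

theorem mainTheorem11: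
  fixes TS :: "real set" and A k \<mu>x :: real and u :: "real \<Rightarrow> real \<Rightarrow> real"
  assumes ts: "time_scale TS"
    and ts_min: "0 \<in> TS" "\<forall>t\<in>TS. 0 \<le> t"
    and ts_unbounded: "\<forall>B. \<exists>t\<in>TS. t > B"
    and A_pos: "A > 0" and k_pos: "k > 0" and mux_pos: "\<mu>x > 0"
    and TS1: "\<forall>t\<in>TS. 1 - k * graininess TS t / \<mu>x > 0"
    and u_diff: "\<forall>m::int. delta_differentiable_on TS (\<lambda>t. u (of_int m * \<mu>x) t)"
    and u_eq: "\<forall>m::int. \<forall>t\<in>TS.
        delta_deriv TS (\<lambda>s. u (of_int m * \<mu>x) s) t
        + k * (u (of_int m * \<mu>x) t - u (of_int m * \<mu>x - \<mu>x) t) / \<mu>x = 0"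
    and u_init0: "u 0 0 = A"
    and u_init: "\<forall>m::int. m \<noteq> 0 \<longrightarrow> u (of_int m * \<mu>x) 0 = 0"
    and u_bdd: "\<forall>T0>0. \<exists>B. \<forall>m::int. \<forall>t\<in>TS. t \<le> T0 \<longrightarrow> \<bar>u (of_int m * \<mu>x) t\<bar> \<le> B"
  shows "\<forall>t\<in>TS. summable (\<lambda>m::nat. u (real m * \<mu>x) t)
           \<and> \<mu>x * (\<Sum>m. u (real m * \<mu>x) t) = A * \<mu>x
           \<and> (\<forall>m::int. m < 0 \<longrightarrow> u (of_int m * \<mu>x) t = 0)"
proof -
  define U where "U = (\<lambda>(m::int) t. u (of_int m * \<mu>x) t)"
  have U_deriv: "has_delta_deriv TS (U m) (- (k / \<mu>x) * (U m t - U (m - 1) t)) t"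
    if t: "t \<in> TS" for m t
  proof -
    have "delta_deriv TS (U m) t + k * (U m t - U (m - 1) t) / \<mu>x = 0"
      using u_eq t unfolding U_def by (simp add: algebra_simps)
    then have "delta_deriv TS (U m) t = - (k / \<mu>x) * (U m t - U (m - 1) t)"
      by (simp add: field_simps)
    moreover have "delta_differentiable_at TS (U m) t"
      using u_diff t by (simp add: delta_differentiable_on_def U_def)
    ultimately show ?thesis using has_delta_deriv_delta_deriv[OF ts_unbounded t] by metis
  qed
  interpret upwind_system TS "k / \<mu>x" A U
    using ts ts_min ts_unbounded A_pos k_pos mux_pos TS1 U_deriv u_init0 u_init u_bdd
    by unfold_locales (auto simp: time_scale_def U_def field_simps)
  show ?thesis
  proof (intro ballI conjI allI impI)
    fix t assume t: "t \<in> TS"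
    have sums: "(\<lambda>m. u (real m * \<mu>x) t) sums A" using mass_conservation[OF t] by (simp add: U_def)
    then show "summable (\<lambda>m. u (real m * \<mu>x) t)" by (rule sums_summable)
    show "\<mu>x * (\<Sum>m. u (real m * \<mu>x) t) = A * \<mu>x" using sums_unique[OF sums] by simp
    fix m :: int assume "m < 0"
    then show "u (of_int m * \<mu>x) t = 0" using U_negative[OF t] by (simp add: U_def)
  qed
qed

end
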